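(* Let $A=(a_{ij})_{i,j=1}^n$ be the symmetric, entrywise nonnegative weighted adjacency matrix of an undirected graph on $n$ nodes, with degrees $d_i=\sum_j a_{ij}$ and total weight $m=\frac12\sum_{ij}a_{ij}>0$. Let $r\ge 1$ and $1\le k\le r$ be integers, and let $V=[v_1,\dots,v_n]$ with each $v_j\in\mathbb{R}^r$. Fix an index $i$ and the vectors $v_j$, $j\neq i$, and consider the subproblem $$\text{maximize}_{v_i}\; Q(v_i)\quad\text{s.t.}\quad v_i\in\mathbb{R}_+^r,\ \|v_i\|=1,\ \operatorname{card}(v_i)\le k,$$ where $Q(V)=\frac{1}{2m}\sum_{i,j}\left[a_{ij}-\frac{d_id_j}{2m}\right]v_i^Tv_j$ and $Q(v_i)$ denotes $Q$ as a function of $v_i$ alone with all other $v_j$ fixed. Let $q=\nabla Q(v_i):=\frac{1}{2m}\sum_{j\neq i}\left(a_{ij}-\frac{d_id_j}{2m}\right)v_j$. Then an optimal solution of the subproblem is $v_i=g/\|g\|$, where $$g=\begin{cases} e(t)\ \text{for a coordinate } t \text{ maximizing } q_t, & \text{if } q\le 0 \text{ (entrywise)},\\ \operatorname{top}_k^+(q), & \text{otherwise.}\end{cases}$$ (In the case $q\le 0$, if several $t$ attain the maximum of $q_t$, one chooses among them the $t$ with maximum $(v_i)_t$ for the previous value of $v_i$.)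
   Context: $\|\cdot\|$ is the Euclidean norm; $\operatorname{card}(v)$ is the number of nonzero entries of $v$; $e(t)$ is the standard basis vector of coordinate $t$ in $\mathbb{R}^r$. For $q\in\mathbb{R}^r$, $\operatorname{top}_k^+(q)$ is the vector of the same shape that keeps the $k$ largest coordinates of $q$ when they are nonnegative and sets all other coordinates (including negative ones among the top $k$) to zero; e.g. $\operatorname{top}_2^+((-1,3))=(0,3)$ and $\operatorname{top}_1^+((-1,-2))=(0,0)$. Note that the term of $Q$ involving $v_i^Tv_i$ is constant on the feasible set since $\|v_i\|=1$. *)

theory Defs
  imports "HOL-Analysis.Analysis"
begin

definition degree :: "('n::finite \<Rightarrow> 'n \<Rightarrow> real) \<Rightarrow> 'n \<Rightarrow> real" where
  "degree A i = (\<Sum>j\<in>UNIV. A i j)"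

definition total_weight :: "('n::finite \<Rightarrow> 'n \<Rightarrow> real) \<Rightarrow> real" where
  "total_weight A = (\<Sum>i\<in>UNIV. \<Sum>j\<in>UNIV. A i j) / 2"

definition modularity ::
  "('n::finite \<Rightarrow> 'n \<Rightarrow> real) \<Rightarrow> ('n \<Rightarrow> real^'r) \<Rightarrow> real" where
  "modularity A V =
     (1 / (2 * total_weight A)) *
     (\<Sum>i\<in>UNIV. \<Sum>j\<in>UNIV.
        (A i j - degree A i * degree A j / (2 * total_weight A)) * (V i \<bullet> V j))"

definition grad_Q ::
  "('n::finite \<Rightarrow> 'n \<Rightarrow> real) \<Rightarrow> ('n \<Rightarrow> real^'r) \<Rightarrow> 'n \<Rightarrow> real^'r" where
  "grad_Q A V i =
     (1 / (2 * total_weight A)) *\<^sub>R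
     (\<Sum>j\<in>UNIV - {i}.
        (A i j - degree A i * degree A j / (2 * total_weight A)) *\<^sub>R V j)"

definition cardv :: "real^'r::finite \<Rightarrow> nat" where
  "cardv v = card {t. v $ t \<noteq> 0}"

definition ebasis :: "'r::finite \<Rightarrow> real^'r" where
  "ebasis t = (\<chi> s. if s = t then 1 else 0)"

definition feasible :: "nat \<Rightarrow> real^'r::finite \<Rightarrow> bool" where
  "feasible k v \<longleftrightarrow> (\<forall>t. 0 \<le> v $ t) \<and> norm v = 1 \<and> cardv v \<le> k"

definition is_topk_plus :: "nat \<Rightarrow> real^'r::finite \<Rightarrow> real^'r \<Rightarrow> bool" where
  "is_topk_plus k q g \<longleftrightarrow>
     (\<exists>S. card S = k \<and> (\<forall>s\<in>S. \<forall>t. t \<notin> S \<longrightarrow> q $ t \<le> q $ s) \<and>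
          g = (\<chi> t. if t \<in> S \<and> 0 \<le> q $ t then q $ t else 0))"

end

theory Submission
  imports Defs
begin

text \<open>As a function of \<open>v\<^sub>i\<close> alone, the modularity is a constant plus \<open>2 q \<bullet> v\<^sub>i\<close> plus a
  multiple of \<open>v\<^sub>i \<bullet> v\<^sub>i\<close>, which is fixed on the unit sphere; so the subproblem is the
  maximisation of the linear form \<open>q \<bullet> w\<close> over nonnegative unit vectors with at most \<open>k\<close>
  nonzero entries. If \<open>q \<le> 0\<close>, then \<open>q \<bullet> w \<le> max q \<cdot> \<Sum>w \<le> max q\<close> because the entries of a
  nonnegative unit vector sum to at least 1. Otherwise \<open>q \<bullet> w\<close> is at most the norm of the
  positive part of \<open>q\<close> on the support of \<open>w\<close> (Cauchy-Schwarz), and among supports of size at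
  most \<open>k\<close> that norm is largest on a set of \<open>k\<close> largest entries, where it is attained by
  \<open>top\<^sub>k\<^sup>+(q)\<close> normalised.\<close>

lemma modularity_fun_upd:
  fixes A :: "'n::finite \<Rightarrow> 'n \<Rightarrow> real" and V :: "'n \<Rightarrow> real^'r::finite"
  assumes symm: "\<And>a b. A a b = A b a"
  shows "modularity A (V(i := w)) = modularity A (V(i := 0)) + 2 * (grad_Q A V i \<bullet> w)
     + (A i i - degree A i * degree A i / (2 * total_weight A)) / (2 * total_weight A) * (w \<bullet> w)"
proof -
  define m2 where "m2 = 2 * total_weight A"
  define c where "c j l = A j l - degree A j * degree A l / m2" for j l
  have c_sym: "c j l = c l j" for j l
    unfolding c_def using symm by (simp add: mult.commute)
  define R where "R = UNIV - {i}"
  have UNIV_eq: "(UNIV::'n set) = insert i R" and "i \<notin> R" and "finite R"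
    unfolding R_def by auto
  have modularity_c: "modularity A W = (\<Sum>j\<in>UNIV. \<Sum>l\<in>UNIV. c j l * (W j \<bullet> W l)) / m2" for W
    unfolding modularity_def m2_def c_def by simp
  have split: "(\<Sum>j\<in>UNIV. \<Sum>l\<in>UNIV. c j l * ((V(i:=x)) j \<bullet> (V(i:=x)) l)) =
     c i i * (x \<bullet> x) + 2 * (\<Sum>l\<in>R. c i l * (x \<bullet> V l)) + (\<Sum>j\<in>R. \<Sum>l\<in>R. c j l * (V j \<bullet> V l))"
    for x
  proof -
    have "(\<Sum>j\<in>R. c j i * ((V(i:=x)) j \<bullet> x)) = (\<Sum>l\<in>R. c i l * (x \<bullet> V l))"
      using \<open>i \<notin> R\<close> by (intro sum.cong) (auto simp: c_sym inner_commute)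
    moreover have "(\<Sum>l\<in>R. c i l * (x \<bullet> (V(i:=x)) l)) = (\<Sum>l\<in>R. c i l * (x \<bullet> V l))"
      using \<open>i \<notin> R\<close> by (intro sum.cong) auto
    moreover have "(\<Sum>j\<in>R. \<Sum>l\<in>R. c j l * ((V(i:=x)) j \<bullet> (V(i:=x)) l)) =
        (\<Sum>j\<in>R. \<Sum>l\<in>R. c j l * (V j \<bullet> V l))"
      using \<open>i \<notin> R\<close> by (intro sum.cong) auto
    ultimately show ?thesis
      unfolding UNIV_eq sum.insert[OF \<open>finite R\<close> \<open>i \<notin> R\<close>] sum.distrib by simp
  qed
  have "grad_Q A V i \<bullet> w = (\<Sum>l\<in>R. c i l * (w \<bullet> V l)) / m2"
    unfolding grad_Q_def m2_def[symmetric] c_def[symmetric] R_def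
    by (simp add: inner_sum_left sum_divide_distrib inner_commute[of w])
  then show ?thesis
    unfolding modularity_c split m2_def[symmetric] c_def[symmetric]
    by (simp add: algebra_simps add_divide_distrib)
qed

lemma modularity_fun_upd_le_iff:
  fixes A :: "'n::finite \<Rightarrow> 'n \<Rightarrow> real" and V :: "'n \<Rightarrow> real^'r::finite"
  assumes "\<And>a b. A a b = A b a" and "norm w = norm u"
  shows "modularity A (V(i := w)) \<le> modularity A (V(i := u)) \<longleftrightarrow>
         grad_Q A V i \<bullet> w \<le> grad_Q A V i \<bullet> u"
proof -
  have "w \<bullet> w = u \<bullet> u"
    using assms(2) by (simp flip: power2_norm_eq_inner)
  then show ?thesis
    unfolding modularity_fun_upd[OF assms(1), where w = w] modularity_fun_upd[OF assms(1), where w = u]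
    by simp
qed

lemma sum_ge_1_if_nonneg_unit:
  fixes w :: "real^'r::finite"
  assumes "\<And>t. 0 \<le> w $ t" and "norm w = 1"
  shows "1 \<le> (\<Sum>t\<in>UNIV. w $ t)"
  using norm_le_l1_cart[of w] assms by simp

lemma ebasis_eq_axis: "ebasis t = axis t 1"
  unfolding ebasis_def axis_def by simp

lemma norm_ebasis [simp]: "norm (ebasis t) = 1"
  by (simp add: ebasis_eq_axis norm_axis_1)

lemma feasible_ebasis:
  assumes "1 \<le> k"
  shows "feasible k (ebasis t)"
proof -
  have "{s. ebasis t $ s \<noteq> 0} = {t}" and "0 \<le> ebasis t $ s" for s
    by (auto simp: ebasis_def)
  then show ?thesis
    unfolding feasible_def cardv_def using assms by simp
qed

lemma inner_le_inner_ebasis: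
  fixes q :: "real^'r::finite"
  assumes max: "\<And>s. q $ s \<le> q $ t" and nonpos: "q $ t \<le> 0" and "feasible k w"
  shows "q \<bullet> w \<le> q \<bullet> ebasis t"
proof -
  have w_nonneg: "\<And>s. 0 \<le> w $ s" and "norm w = 1"
    using \<open>feasible k w\<close> unfolding feasible_def by auto
  have "q \<bullet> w = (\<Sum>s\<in>UNIV. q $ s * w $ s)"
    by (simp add: inner_vec_def)
  also have "\<dots> \<le> (\<Sum>s\<in>UNIV. q $ t * w $ s)"
    by (intro sum_mono mult_right_mono max w_nonneg)
  also have "\<dots> = q $ t * (\<Sum>s\<in>UNIV. w $ s)"
    by (simp add: sum_distrib_left)
  also have "\<dots> \<le> q $ t"
    using mult_left_mono_neg[OF sum_ge_1_if_nonneg_unit[OF w_nonneg \<open>norm w = 1\<close>] nonpos]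
    by simp
  finally show ?thesis
    by (simp add: ebasis_eq_axis inner_axis)
qed

definition pos_part_on :: "'r set \<Rightarrow> real^'r::finite \<Rightarrow> real^'r" where
  "pos_part_on S q = (\<chi> t. if t \<in> S then max (q $ t) 0 else 0)"

lemma is_topk_plus_iff:
  "is_topk_plus k q g \<longleftrightarrow>
     (\<exists>S. card S = k \<and> (\<forall>s\<in>S. \<forall>t. t \<notin> S \<longrightarrow> q $ t \<le> q $ s) \<and> g = pos_part_on S q)"
proof -
  have "(\<chi> t. if t \<in> S \<and> 0 \<le> q $ t then q $ t else 0) = pos_part_on S q" for S
    unfolding pos_part_on_def by (rule vec_eq_iff[THEN iffD2]) auto
  then show ?thesis
    unfolding is_topk_plus_def by simp
qed

lemma norm_pos_part_on_power2:
  "(norm (pos_part_on S q))\<^sup>2 = (\<Sum>t\<in>S. (max (q $ t) 0)\<^sup>2)"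
proof -
  have "(norm (pos_part_on S q))\<^sup>2 = (\<Sum>t\<in>UNIV. if t \<in> S then (max (q $ t) 0)\<^sup>2 else 0)"
    unfolding power2_norm_eq_inner inner_vec_def pos_part_on_def
    by (intro sum.cong) (auto simp: power2_eq_square)
  then show ?thesis
    by (simp add: sum.If_cases)
qed

lemma inner_pos_part_on_self: "q \<bullet> pos_part_on S q = (norm (pos_part_on S q))\<^sup>2"
  unfolding power2_norm_eq_inner inner_vec_def pos_part_on_def
  by (intro sum.cong) auto

lemma inner_le_inner_pos_part_on_support:
  fixes q w :: "real^'r::finite"
  assumes "\<And>t. 0 \<le> w $ t"
  shows "q \<bullet> w \<le> pos_part_on {t. w $ t \<noteq> 0} q \<bullet> w"
  unfolding inner_vec_def pos_part_on_def
  using assms by (intro sum_mono) (auto intro: mult_right_mono)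

lemma sum_le_sum_of_top:
  fixes f :: "'a \<Rightarrow> 'b::ordered_comm_monoid_add"
  assumes "finite S" and "finite T" and "card T \<le> card S"
    and top: "\<And>s t. s \<in> S \<Longrightarrow> t \<notin> S \<Longrightarrow> f t \<le> f s"
    and nonneg: "\<And>t. 0 \<le> f t"
  shows "sum f T \<le> sum f S"
proof -
  have "card (T - S) \<le> card (S - T)"
    using assms(1-3) by (simp add: card_Diff_subset_Int Int_commute diff_le_mono)
  then obtain h where h_into: "h ` (T - S) \<subseteq> S - T" and "inj_on h (T - S)"
    using card_le_inj[of "T - S" "S - T"] assms(1,2) by auto
  have "sum f (T - S) \<le> sum (f \<circ> h) (T - S)"
    using h_into by (intro sum_mono) (auto intro: top)
  also have "\<dots> = sum f (h ` (T - S))"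
    by (simp add: sum.reindex[OF \<open>inj_on h (T - S)\<close>])
  also have "\<dots> \<le> sum f (S - T)"
    using h_into assms(1) by (intro sum_mono2) (auto intro: nonneg)
  finally have "sum f (T \<inter> S) + sum f (T - S) \<le> sum f (S \<inter> T) + sum f (S - T)"
    by (simp add: Int_commute add_left_mono)
  then show ?thesis
    using assms(1,2) by (simp add: sum.Int_Diff[symmetric])
qed

lemma norm_pos_part_on_le:
  fixes q :: "real^'r::finite"
  assumes "card T \<le> card S" and top: "\<And>s t. s \<in> S \<Longrightarrow> t \<notin> S \<Longrightarrow> q $ t \<le> q $ s"
  shows "norm (pos_part_on T q) \<le> norm (pos_part_on S q)"
proof -
  have "(\<Sum>t\<in>T. (max (q $ t) 0)\<^sup>2) \<le> (\<Sum>t\<in>S. (max (q $ t) 0)\<^sup>2)"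
    using assms by (intro sum_le_sum_of_top power_mono max.mono) auto
  then show ?thesis
    by (simp flip: norm_pos_part_on_power2 add: power2_le_iff_abs_le)
qed

lemma inner_le_inner_topk_plus:
  fixes q :: "real^'r::finite"
  assumes "is_topk_plus k q g" and "feasible k w"
  shows "q \<bullet> w \<le> q \<bullet> (g /\<^sub>R norm g)"
proof -
  obtain S where "card S = k" and top: "\<And>s t. s \<in> S \<Longrightarrow> t \<notin> S \<Longrightarrow> q $ t \<le> q $ s"
    and g: "g = pos_part_on S q"
    using assms(1) unfolding is_topk_plus_iff by blast
  define T where "T = {t. w $ t \<noteq> 0}"
  have w_nonneg: "\<And>t. 0 \<le> w $ t" and "norm w = 1" and "card T \<le> card S"
    using assms(2) \<open>card S = k\<close> unfolding feasible_def cardv_def T_def by auto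
  have "q \<bullet> w \<le> pos_part_on T q \<bullet> w"
    unfolding T_def by (rule inner_le_inner_pos_part_on_support[OF w_nonneg])
  also have "\<dots> \<le> norm (pos_part_on T q)"
    using norm_cauchy_schwarz[of "pos_part_on T q" w] \<open>norm w = 1\<close> by simp
  also have "\<dots> \<le> norm g"
    unfolding g by (rule norm_pos_part_on_le[OF \<open>card T \<le> card S\<close> top])
  also have "\<dots> = q \<bullet> (g /\<^sub>R norm g)"
    unfolding g inner_scaleR_right inner_pos_part_on_self
    by (cases "pos_part_on S q = 0") (simp_all add: power2_eq_square)
  finally show ?thesis .
qed

lemma feasible_topk_plus:
  fixes q :: "real^'r::finite"
  assumes "is_topk_plus k q g" and "1 \<le> k" and "0 < q $ t"
  shows "feasible k (g /\<^sub>R norm g)"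
proof -
  obtain S where "card S = k" and top: "\<And>s t. s \<in> S \<Longrightarrow> t \<notin> S \<Longrightarrow> q $ t \<le> q $ s"
    and g: "g = pos_part_on S q"
    using assms(1) unfolding is_topk_plus_iff by blast
  obtain s where "s \<in> S" and "0 < q $ s"
  proof (cases "t \<in> S")
    case False
    obtain s where "s \<in> S"
      using \<open>card S = k\<close> \<open>1 \<le> k\<close> by fastforce
    then show ?thesis
      using that top[OF _ False] \<open>0 < q $ t\<close> by (meson less_le_trans)
  qed (use that \<open>0 < q $ t\<close> in blast)
  then have "0 < g $ s"
    unfolding g pos_part_on_def by simp
  then have "g \<noteq> 0"
    by (metis less_irrefl zero_index)
  then have "0 < norm g"
    by simp
  have "{t. (g /\<^sub>R norm g) $ t \<noteq> 0} \<subseteq> S"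
    unfolding g pos_part_on_def by auto
  then have "cardv (g /\<^sub>R norm g) \<le> k"
    unfolding cardv_def \<open>card S = k\<close>[symmetric] by (intro card_mono) simp_all
  moreover have "0 \<le> (g /\<^sub>R norm g) $ t" for t
    unfolding g pos_part_on_def by simp
  ultimately show ?thesis
    unfolding feasible_def using \<open>0 < norm g\<close> by simp
qed

theorem proposition1:
  fixes A :: "'n::finite \<Rightarrow> 'n \<Rightarrow> real"
    and V :: "'n \<Rightarrow> real^'r::finite"
    and i :: 'n and k :: nat and g :: "real^'r"
  assumes symm: "\<And>a b. A a b = A b a"
    and nonneg: "\<And>a b. 0 \<le> A a b"
    and m_pos: "total_weight A > 0"
    and k_ge: "1 \<le> k" and k_le: "k \<le> CARD('r)"
    and g_def: "if (\<forall>t. grad_Q A V i $ t \<le> 0)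
                then (\<exists>t. (\<forall>s. grad_Q A V i $ s \<le> grad_Q A V i $ t) \<and> g = ebasis t)
                else is_topk_plus k (grad_Q A V i) g"
  shows "feasible k (g /\<^sub>R norm g) \<and>
         (\<forall>w. feasible k w \<longrightarrow>
              modularity A (V(i := w)) \<le> modularity A (V(i := g /\<^sub>R norm g)))"
proof -
  define q where "q = grad_Q A V i"
  define u where "u = g /\<^sub>R norm g"
  have "feasible k u \<and> (\<forall>w. feasible k w \<longrightarrow> q \<bullet> w \<le> q \<bullet> u)"
  proof (cases "\<forall>t. q $ t \<le> 0")
    case True
    then obtain t where max: "\<And>s. q $ s \<le> q $ t" and "g = ebasis t" and "q $ t \<le> 0"
      using g_def unfolding q_def by auto
    then have "u = ebasis t"
      unfolding u_def by simp
    then show ?thesis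
      using feasible_ebasis[OF k_ge] inner_le_inner_ebasis[OF max \<open>q $ t \<le> 0\<close>] by simp
  next
    case False
    then obtain t where "0 < q $ t" and "is_topk_plus k q g"
      using g_def unfolding q_def by (auto simp: not_le)
    then show ?thesis
      unfolding u_def using feasible_topk_plus[OF _ k_ge] inner_le_inner_topk_plus by blast
  qed
  moreover have "modularity A (V(i := w)) \<le> modularity A (V(i := u)) \<longleftrightarrow> q \<bullet> w \<le> q \<bullet> u"
    if "feasible k w" and "feasible k u" for w
    using that unfolding q_def feasible_def by (intro modularity_fun_upd_le_iff[OF symm]) simp
  ultimately show ?thesis
    unfolding u_def by blast
qed

end
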